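(* Let $n\ge2$, let $D$ and $D'$ be proper subdomains of $\mathbb{R}^n$, and let $f:\overline{\mathbb{R}}^n\to\overline{\mathbb{R}}^n$ be a Möbius transformation with $f(D)=D'$. Then for all $x,y\in D$, $$\tfrac12\tilde\tau_D(x,y)\le\tilde\tau_{D'}(f(x),f(y))\le2\tilde\tau_D(x,y).$$
   Context: $\overline{\mathbb{R}}^n=\mathbb{R}^n\cup\{\infty\}$; a Möbius transformation is a finite composition of reflections in spheres and hyperplanes. For a proper subdomain $D\subsetneq\mathbb{R}^n$ and $x,y\in D$, $\tilde\tau_D(x,y)=\log\big(1+\sup_{p\in\partial D}\frac{|x-y|}{\sqrt{|x-p||y-p|}}\big)$ (the scale invariant Cassinian metric), where $\partial D$ is the boundary of $D$ in $\mathbb{R}^n$. *)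

theory Defs
  imports "HOL-Analysis.Analysis"
begin

text \<open>Extended space: None plays the role of the point at infinity.\<close>
type_synonym 'n ext = "(real ^ 'n) option"

definition sphere_refl :: "real ^ 'n::finite \<Rightarrow> real \<Rightarrow> 'n ext \<Rightarrow> 'n ext" where
  "sphere_refl a r z = (case z of
       None \<Rightarrow> Some a
     | Some x \<Rightarrow> (if x = a then None
                  else Some (a + (r\<^sup>2 / (norm (x - a))\<^sup>2) *\<^sub>R (x - a))))"

definition hyperplane_refl :: "real ^ 'n::finite \<Rightarrow> real \<Rightarrow> 'n ext \<Rightarrow> 'n ext" where
  "hyperplane_refl u t z = map_option
       (\<lambda>x. x - (2 * (u \<bullet> x - t) / (norm u)\<^sup>2) *\<^sub>R u) z"

inductive is_reflection :: "('n::finite ext \<Rightarrow> 'n ext) \<Rightarrow> bool" where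
  sphere: "r > 0 \<Longrightarrow> is_reflection (sphere_refl a r)"
| hyperplane: "u \<noteq> 0 \<Longrightarrow> is_reflection (hyperplane_refl u t)"

inductive mobius :: "('n::finite ext \<Rightarrow> 'n ext) \<Rightarrow> bool" where
  refl: "is_reflection g \<Longrightarrow> mobius g"
| comp: "mobius f \<Longrightarrow> is_reflection g \<Longrightarrow> mobius (g \<circ> f)"

definition proper_domain :: "(real ^ 'n::finite) set \<Rightarrow> bool" where
  "proper_domain D \<longleftrightarrow> open D \<and> connected D \<and> D \<noteq> {} \<and> D \<noteq> UNIV"

definition sic_metric :: "(real ^ 'n::finite) set \<Rightarrow> real ^ 'n \<Rightarrow> real ^ 'n \<Rightarrow> real" where
  "sic_metric D x y = ln (1 + (SUP p\<in>frontier D. dist x y / sqrt (dist x p * dist y p)))"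

end

theory Submission
  imports Defs
begin

text \<open>A Moebius map f rescales the distance of the one-point extension, in which \<open>\<infinity>\<close> lies at
distance 1 from every finite point, by a positive conformal factor:
\<open>ext_dist (f z) (f w) = k z * k w * ext_dist z w\<close>. Hence the four-point quantity
\<open>|x - y| |p - q| / sqrt (|x - p| |y - p| |x - q| |y - q|)\<close> is Moebius invariant. With
\<open>q = f\<^sup>-\<^sup>1 \<infinity>\<close> it turns the Cassinian quotient of f x, f y at a boundary point \<open>f p\<close> of D' into
the four-point quantity of x, y, p, q, where p and q lie outside D. The triangle inequality gives
\<open>|p - q| \<le> sqrt (|x - p| |y - p|) + sqrt (|x - q| |y - q|) + |x - y|\<close>, so this quantity is at
most \<open>2 B + B\<^sup>2\<close>, where B is the supremum defining the metric of D (it dominates the quotient on the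
whole complement of D, not only on the boundary). As \<open>1 + 2 B + B\<^sup>2 = (1 + B)\<^sup>2\<close>, taking
logarithms gives the upper bound; the lower one follows by applying it to \<open>f\<^sup>-\<^sup>1\<close>.\<close>

fun ext_dist :: "'a::metric_space option \<Rightarrow> 'a option \<Rightarrow> real" where
  "ext_dist (Some x) (Some y) = dist x y"
| "ext_dist (Some x) None = 1"
| "ext_dist None (Some y) = 1"
| "ext_dist None None = 0"

definition dist_scaling :: "('a::metric_space option \<Rightarrow> 'a option) \<Rightarrow> bool" where
  "dist_scaling f \<longleftrightarrow>
     (\<exists>k. (\<forall>z. 0 < k z) \<and> (\<forall>z w. ext_dist (f z) (f w) = k z * k w * ext_dist z w))"

lemma sphere_inversion_dist:
  fixes x y a :: "'a::real_inner"
  assumes "x \<noteq> a" "y \<noteq> a"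
  shows "dist (a + (r\<^sup>2 / (norm (x - a))\<^sup>2) *\<^sub>R (x - a)) (a + (r\<^sup>2 / (norm (y - a))\<^sup>2) *\<^sub>R (y - a))
       = r\<^sup>2 * dist x y / (dist x a * dist y a)"
proof -
  define X Y where "X = x - a" and "Y = y - a"
  have pos: "norm X > 0" "norm Y > 0" using assms by (auto simp: X_def Y_def)
  have "(norm ((r\<^sup>2 / (norm X)\<^sup>2) *\<^sub>R X - (r\<^sup>2 / (norm Y)\<^sup>2) *\<^sub>R Y))\<^sup>2
      = (r\<^sup>2 * norm (X - Y) / (norm X * norm Y))\<^sup>2"
    using pos
    by (simp add: power2_norm_eq_inner inner_diff_left inner_diff_right inner_commute
        power_divide power_mult_distrib)
      (simp add: power2_norm_eq_inner[symmetric] field_simps power2_eq_square)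
  then have "norm ((r\<^sup>2 / (norm X)\<^sup>2) *\<^sub>R X - (r\<^sup>2 / (norm Y)\<^sup>2) *\<^sub>R Y)
      = r\<^sup>2 * norm (X - Y) / (norm X * norm Y)"
    by (rule power2_eq_imp_eq) (use pos in simp_all)
  then show ?thesis by (simp add: X_def Y_def dist_norm)
qed

lemma sphere_inversion_dist_center:
  fixes x a :: "'a::real_normed_vector"
  assumes "x \<noteq> a"
  shows "dist (a + (r\<^sup>2 / (norm (x - a))\<^sup>2) *\<^sub>R (x - a)) a = r\<^sup>2 / dist x a"
  using assms by (simp add: dist_norm power2_eq_square)

lemma dist_scaling_sphere_refl:
  assumes "r > 0"
  shows "dist_scaling (sphere_refl a r)"
proof -
  define k where "k z = (case z of None \<Rightarrow> r | Some x \<Rightarrow> if x = a then 1 / r else r / dist x a)" for z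
  have "ext_dist (sphere_refl a r z) (sphere_refl a r w) = k z * k w * ext_dist z w" for z w
    using assms
    by (cases z; cases w)
       (auto simp: sphere_refl_def k_def sphere_inversion_dist sphere_inversion_dist_center
         dist_commute[of a] simp del: dist_add_cancel dist_add_cancel2,
        simp_all add: power2_eq_square)
  moreover have "0 < k z" for z
    using assms by (auto simp: k_def split: option.splits)
  ultimately show ?thesis
    unfolding dist_scaling_def by blast
qed

lemma sphere_refl_involution:
  assumes "r > 0"
  shows "sphere_refl a r (sphere_refl a r z) = z"
proof (cases z)
  case (Some x)
  show ?thesis
  proof (cases "x = a")
    case False
    define t where "t = r\<^sup>2 / (norm (x - a))\<^sup>2"
    have t: "t > 0" using False assms by (simp add: t_def)
    have norm_scaled: "norm (t *\<^sub>R (x - a)) = t * norm (x - a)"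
      using t by simp
    have "r\<^sup>2 / (norm (t *\<^sub>R (x - a)))\<^sup>2 * t = 1"
      unfolding norm_scaled using t False assms by (simp add: t_def power_mult_distrib field_simps)
    then have "a + (r\<^sup>2 / (norm (t *\<^sub>R (x - a)))\<^sup>2) *\<^sub>R (t *\<^sub>R (x - a)) = x"
      by (simp only: scaleR_scaleR scaleR_one) simp
    then show ?thesis
      using Some False t assms by (simp add: sphere_refl_def t_def)
  qed (simp add: Some sphere_refl_def)
qed (simp add: sphere_refl_def)

lemma hyperplane_reflection_dist:
  fixes u :: "'a::real_inner"
  assumes "u \<noteq> 0"
  shows "dist (x - (2 * (u \<bullet> x - t) / (norm u)\<^sup>2) *\<^sub>R u) (y - (2 * (u \<bullet> y - t) / (norm u)\<^sup>2) *\<^sub>R u)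
       = dist x y"
proof -
  have diff: "(x - (2 * (u \<bullet> x - t) / (norm u)\<^sup>2) *\<^sub>R u) - (y - (2 * (u \<bullet> y - t) / (norm u)\<^sup>2) *\<^sub>R u)
      = (x - y) - (2 * (u \<bullet> (x - y)) / (norm u)\<^sup>2) *\<^sub>R u"
    by (simp add: inner_diff_right algebra_simps diff_divide_distrib)
  have "(norm ((x - y) - (2 * (u \<bullet> (x - y)) / (norm u)\<^sup>2) *\<^sub>R u))\<^sup>2 = (norm (x - y))\<^sup>2"
    using assms by (simp add: power2_norm_eq_inner inner_diff_left inner_diff_right inner_commute)
  then have "norm ((x - y) - (2 * (u \<bullet> (x - y)) / (norm u)\<^sup>2) *\<^sub>R u) = norm (x - y)"
    using power2_eq_imp_eq norm_ge_zero by blast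
  then show ?thesis
    by (simp only: dist_norm diff)
qed

lemma dist_scaling_hyperplane_refl:
  assumes "u \<noteq> 0"
  shows "dist_scaling (hyperplane_refl u t)"
proof -
  have "ext_dist (hyperplane_refl u t z) (hyperplane_refl u t w) = 1 * 1 * ext_dist z w" for z w
    by (cases z; cases w)
       (simp_all only: hyperplane_refl_def option.map ext_dist.simps
         hyperplane_reflection_dist[OF assms] mult_1)
  then show ?thesis
    unfolding dist_scaling_def by (intro exI[of _ "\<lambda>_. 1"]) auto
qed

lemma hyperplane_refl_involution:
  assumes "u \<noteq> 0"
  shows "hyperplane_refl u t (hyperplane_refl u t z) = z"
proof (cases z)
  case (Some x)
  define l where "l = 2 * (u \<bullet> x - t) / (norm u)\<^sup>2"
  have "u \<bullet> (x - l *\<^sub>R u) - t = - (u \<bullet> x - t)"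
    using assms
    by (simp add: l_def inner_diff_right power2_norm_eq_inner[symmetric] field_simps power2_eq_square)
  then have reflected: "2 * (u \<bullet> (x - l *\<^sub>R u) - t) / (norm u)\<^sup>2 = - l"
    by (simp add: l_def minus_divide_left)
  have "hyperplane_refl u t (hyperplane_refl u t z) = Some ((x - l *\<^sub>R u) - (- l) *\<^sub>R u)"
    by (simp only: Some hyperplane_refl_def option.map l_def[symmetric] reflected)
  then show ?thesis
    by (simp add: Some)
qed (simp add: hyperplane_refl_def)

lemma dist_scaling_reflection: "is_reflection g \<Longrightarrow> dist_scaling g"
  by (induction rule: is_reflection.induct)
     (simp_all add: dist_scaling_sphere_refl dist_scaling_hyperplane_refl)

lemma reflection_involution: "is_reflection g \<Longrightarrow> g (g z) = z"
  by (induction rule: is_reflection.induct)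
     (simp_all add: sphere_refl_involution hyperplane_refl_involution)

lemma bij_reflection: "is_reflection g \<Longrightarrow> bij g"
  by (metis bijI' reflection_involution)

lemma dist_scaling_comp:
  assumes "dist_scaling f" "dist_scaling g"
  shows "dist_scaling (g \<circ> f)"
proof -
  obtain kf where "\<forall>z. 0 < kf z" "\<forall>z w. ext_dist (f z) (f w) = kf z * kf w * ext_dist z w"
    using assms(1) unfolding dist_scaling_def by blast
  moreover obtain kg where "\<forall>z. 0 < kg z" "\<forall>z w. ext_dist (g z) (g w) = kg z * kg w * ext_dist z w"
    using assms(2) unfolding dist_scaling_def by blast
  ultimately show ?thesis
    unfolding dist_scaling_def by (intro exI[of _ "\<lambda>z. kg (f z) * kf z"]) simp
qed

lemma dist_scaling_inv:
  assumes "dist_scaling f" "bij f"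
  shows "dist_scaling (inv f)"
proof -
  obtain k where k: "\<And>z. 0 < k z" "\<And>z w. ext_dist (f z) (f w) = k z * k w * ext_dist z w"
    using assms(1) unfolding dist_scaling_def by blast
  have "ext_dist (inv f z) (inv f w) = 1 / k (inv f z) * (1 / k (inv f w)) * ext_dist z w" for z w
    using k(1)[of "inv f z"] k(1)[of "inv f w"] k(2)[of "inv f z" "inv f w"] assms(2)
    by (simp add: bij_is_surj surj_f_inv_f field_simps)
  then show ?thesis
    unfolding dist_scaling_def using k(1) by (intro exI[of _ "\<lambda>z. 1 / k (inv f z)"]) simp
qed

lemma mobius_dist_scaling_bij: "mobius f \<Longrightarrow> dist_scaling f \<and> bij f"
  by (induction rule: mobius.induct)
     (auto simp: dist_scaling_reflection bij_reflection dist_scaling_comp bij_comp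
       simp del: o_apply)

definition cassinian_quotient :: "'a::metric_space \<Rightarrow> 'a \<Rightarrow> 'a \<Rightarrow> real" where
  "cassinian_quotient x y p = dist x y / sqrt (dist x p * dist y p)"

definition cassinian_cross_ratio ::
    "'a::metric_space option \<Rightarrow> 'a option \<Rightarrow> 'a option \<Rightarrow> 'a option \<Rightarrow> real" where
  "cassinian_cross_ratio x y p q =
     ext_dist x y * ext_dist p q / sqrt (ext_dist x p * ext_dist y p * ext_dist x q * ext_dist y q)"

lemma cassinian_quotient_nonneg: "0 \<le> cassinian_quotient x y p"
  by (simp add: cassinian_quotient_def)

lemma cassinian_cross_ratio_infinity:
  "cassinian_cross_ratio (Some x) (Some y) (Some p) None = cassinian_quotient x y p"
  by (simp add: cassinian_cross_ratio_def cassinian_quotient_def)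

lemma dist_scaling_cassinian_cross_ratio:
  assumes "dist_scaling f"
  shows "cassinian_cross_ratio (f x) (f y) (f p) (f q) = cassinian_cross_ratio x y p q"
proof -
  obtain k where k: "\<And>z. 0 < k z" "\<And>z w. ext_dist (f z) (f w) = k z * k w * ext_dist z w"
    using assms unfolding dist_scaling_def by blast
  define K where "K = k x * k y * k p * k q"
  have K: "K > 0"
    using k(1) by (simp add: K_def)
  have "ext_dist (f x) (f y) * ext_dist (f p) (f q) = K * (ext_dist x y * ext_dist p q)"
    by (simp add: k(2) K_def ac_simps)
  moreover have "ext_dist (f x) (f p) * ext_dist (f y) (f p) * ext_dist (f x) (f q) * ext_dist (f y) (f q)
      = K\<^sup>2 * (ext_dist x p * ext_dist y p * ext_dist x q * ext_dist y q)"
    by (simp add: k(2) K_def power2_eq_square ac_simps)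
  ultimately show ?thesis
    using K by (simp add: cassinian_cross_ratio_def real_sqrt_mult)
qed

lemma le_sqrt_mult_if_le:
  fixes a b :: real
  assumes "0 \<le> a" "a \<le> b"
  shows "a \<le> sqrt (a * b)"
  using real_sqrt_le_mono[of "a * a" "a * b"] assms by (simp add: mult_left_mono)

lemma dist_le_sqrt_dist_mult_add:
  fixes x y p w :: "'a::metric_space"
  shows "dist p w \<le> sqrt (dist x p * dist y p) + sqrt (dist x w * dist y w) + dist x y"
proof -
  have "dist p w \<le> sqrt (dist x p * dist y p) + sqrt (dist x w * dist y w) + dist x y"
    if le: "dist x p \<le> dist y p" for x y
  proof -
    have "dist x p \<le> sqrt (dist x p * dist y p)"
      using le by (simp add: le_sqrt_mult_if_le)
    moreover have "dist x w \<le> sqrt (dist x w * dist y w) + dist x y"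
    proof (cases "dist x w \<le> dist y w")
      case True
      then show ?thesis
        using le_sqrt_mult_if_le[OF zero_le_dist True] zero_le_dist[of x y] by linarith
    next
      case False
      then have "dist y w \<le> sqrt (dist x w * dist y w)"
        using le_sqrt_mult_if_le[of "dist y w" "dist x w"] by (simp add: mult.commute)
      then show ?thesis
        using dist_triangle[of x w y] by (simp add: dist_commute)
    qed
    ultimately show ?thesis
      using dist_triangle[of p w x] by (simp add: dist_commute)
  qed
  from this[of x y] this[of y x] show ?thesis
    by (cases "dist x p \<le> dist y p") (simp_all add: dist_commute mult.commute)
qed

lemma cassinian_cross_ratio_le:
  fixes x y p w :: "'a::metric_space"
  shows "cassinian_cross_ratio (Some x) (Some y) (Some p) (Some w)
    \<le> cassinian_quotient x y p + cassinian_quotient x y w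
      + cassinian_quotient x y p * cassinian_quotient x y w"
proof -
  define G H u where "G = sqrt (dist x p * dist y p)" and "H = sqrt (dist x w * dist y w)"
    and "u = dist x y"
  have "dist x p * dist y p * dist x w * dist y w = (dist x p * dist y p) * (dist x w * dist y w)"
    by (simp add: ac_simps)
  then have ratio: "cassinian_cross_ratio (Some x) (Some y) (Some p) (Some w) = u * dist p w / (G * H)"
    by (simp add: cassinian_cross_ratio_def G_def H_def u_def real_sqrt_mult)
  have quotients: "cassinian_quotient x y p = u / G" "cassinian_quotient x y w = u / H"
    by (simp_all add: cassinian_quotient_def G_def H_def u_def)
  show ?thesis
  proof (cases "G > 0 \<and> H > 0")
    case True
    have "u * dist p w / (G * H) \<le> u * (G + H + u) / (G * H)"
      using dist_le_sqrt_dist_mult_add[of p w x y] True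
      by (intro divide_right_mono mult_left_mono) (simp_all add: G_def H_def u_def)
    also have "\<dots> = u / G + u / H + u / G * (u / H)"
      using True by (simp add: field_simps power2_eq_square)
    finally show ?thesis
      using ratio quotients by simp
  next
    case False
    moreover have "G \<ge> 0" "H \<ge> 0"
      by (simp_all add: G_def H_def)
    ultimately have "cassinian_cross_ratio (Some x) (Some y) (Some p) (Some w) = 0"
      using ratio by auto
    moreover have "cassinian_quotient x y p \<ge> 0" "cassinian_quotient x y w \<ge> 0"
      by (simp_all add: cassinian_quotient_def)
    ultimately show ?thesis
      by simp
  qed
qed

lemma segment_meets_frontier:
  fixes D :: "'a::real_normed_vector set"
  assumes "open D" "x \<in> D" "w \<notin> D"
  obtains s where "0 < s" "s \<le> 1" "(1 - s) *\<^sub>R x + s *\<^sub>R w \<in> frontier D"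
proof -
  have "closed_segment x w \<inter> frontier D \<noteq> {}"
    using assms by (intro connected_Int_frontier) auto
  then obtain s where s: "0 \<le> s" "s \<le> 1" "(1 - s) *\<^sub>R x + s *\<^sub>R w \<in> frontier D"
    unfolding closed_segment_def by blast
  moreover have "s \<noteq> 0"
    using s(3) assms(1,2) by (auto simp: frontier_def interior_open)
  ultimately show thesis
    using that[of s] by force
qed

lemma dist_mult_le_on_segment:
  fixes x y w :: "'a::real_normed_vector"
  assumes s: "0 < s" "s \<le> 1" and near: "dist x y \<le> 2 * dist y w"
  defines "q \<equiv> (1 - s) *\<^sub>R x + s *\<^sub>R w"
  shows "dist x q * dist y q \<le> dist x w * dist y w"
proof -
  have dxq: "dist x q = s * dist x w"
  proof -
    have "x - q = s *\<^sub>R (x - w)"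
      by (simp add: q_def algebra_simps)
    then show ?thesis
      using s by (simp add: dist_norm)
  qed
  have dyq: "dist y q \<le> (1 - s) * dist x y + s * dist y w"
  proof -
    have "y - q = (1 - s) *\<^sub>R (y - x) + s *\<^sub>R (y - w)"
      by (simp add: q_def algebra_simps)
    then have "dist y q \<le> norm ((1 - s) *\<^sub>R (y - x)) + norm (s *\<^sub>R (y - w))"
      by (metis dist_norm norm_triangle_ineq)
    then show ?thesis
      using s by (simp add: dist_norm norm_minus_commute)
  qed
  have "s * ((1 - s) * dist x y) \<le> s * ((1 - s) * (2 * dist y w))"
    using s near by (intro mult_left_mono) auto
  also have "\<dots> = (1 - s) * dist y w * (2 * s)"
    by (simp add: algebra_simps)
  also have "\<dots> \<le> (1 - s) * dist y w * (1 + s)"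
    using s by (intro mult_left_mono) auto
  finally have "s * ((1 - s) * dist x y + s * dist y w) \<le> dist y w"
    by (simp add: algebra_simps power2_eq_square)
  then have "dist x w * (s * ((1 - s) * dist x y + s * dist y w)) \<le> dist x w * dist y w"
    by (simp add: mult_left_mono)
  moreover have "dist x q * dist y q \<le> dist x w * (s * ((1 - s) * dist x y + s * dist y w))"
    using dxq dyq s by (simp add: mult_left_mono)
  ultimately show ?thesis
    by linarith
qed

lemma bdd_above_cassinian_quotient_complement:
  assumes "open D" "x \<in> D" "y \<in> D"
  shows "bdd_above (cassinian_quotient x y ` (- D))"
proof -
  obtain e1 where e1: "e1 > 0" "ball x e1 \<subseteq> D"
    using assms(1,2) open_contains_ball by blast
  obtain e2 where e2: "e2 > 0" "ball y e2 \<subseteq> D"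
    using assms(1,3) open_contains_ball by blast
  have "cassinian_quotient x y p \<le> dist x y / sqrt (e1 * e2)" if "p \<notin> D" for p
  proof -
    have "e1 \<le> dist x p" "e2 \<le> dist y p"
      using that e1 e2 by (auto simp: subset_eq not_less)
    then have "e1 * e2 \<le> dist x p * dist y p"
      using e1 e2 by (intro mult_mono) auto
    moreover have "0 < e1 * e2"
      using e1 e2 by simp
    ultimately have "0 < dist x p * dist y p" "sqrt (e1 * e2) \<le> sqrt (dist x p * dist y p)"
      by simp_all
    then show ?thesis
      unfolding cassinian_quotient_def using e1 e2 by (intro divide_left_mono) auto
  qed
  then show ?thesis
    by (intro bdd_aboveI2) auto
qed

text \<open>Walking from x towards w until the frontier is hit decreases the product of the distances,
hence increases the quotient, provided y is not much closer to w than x; otherwise start at y.\<close>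

lemma cassinian_quotient_le_SUP_frontier:
  fixes D :: "'a::real_normed_vector set"
  assumes D: "open D" and xy: "x \<in> D" "y \<in> D" and w: "w \<notin> D"
  shows "cassinian_quotient x y w \<le> (SUP p\<in>frontier D. cassinian_quotient x y p)"
proof -
  have bdd: "bdd_above (cassinian_quotient x y ` frontier D)"
    using bdd_above_cassinian_quotient_complement[OF D xy]
    by (rule bdd_above_mono) (use D in \<open>auto simp: frontier_def interior_open\<close>)
  have "cassinian_quotient x y w \<le> (SUP p\<in>frontier D. cassinian_quotient x y p)"
    if x: "x \<in> D" and y: "y \<in> D" and near: "dist x y \<le> 2 * dist y w"
      and bdd: "bdd_above (cassinian_quotient x y ` frontier D)" for x y
  proof -
    obtain s where s: "0 < s" "s \<le> 1" and q: "(1 - s) *\<^sub>R x + s *\<^sub>R w \<in> frontier D"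
      using segment_meets_frontier[OF D x w] .
    define q where "q = (1 - s) *\<^sub>R x + s *\<^sub>R w"
    have "q \<notin> D"
      using q D by (simp add: q_def frontier_def interior_open)
    then have "0 < dist x q * dist y q"
      using x y by (intro mult_pos_pos) auto
    then have "cassinian_quotient x y w \<le> cassinian_quotient x y q"
      using dist_mult_le_on_segment[OF s near]
      unfolding cassinian_quotient_def q_def by (intro divide_left_mono) auto
    also have "\<dots> \<le> (SUP p\<in>frontier D. cassinian_quotient x y p)"
      using bdd q by (intro cSUP_upper) (simp_all add: q_def)
    finally show ?thesis .
  qed
  moreover have "cassinian_quotient y x = cassinian_quotient x y"
    by (auto simp: fun_eq_iff cassinian_quotient_def dist_commute mult.commute)
  moreover have "dist x y \<le> 2 * dist y w \<or> dist y x \<le> 2 * dist x w"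
    using dist_triangle[of x y w] by (auto simp: dist_commute)
  ultimately show ?thesis
    using xy bdd by metis
qed

lemma cassinian_cross_ratio_le_SUP_frontier:
  fixes D :: "'a::real_normed_vector set"
  assumes D: "open D" "D \<noteq> UNIV" and xy: "x \<in> D" "y \<in> D"
    and pq: "p \<notin> Some ` D" "q \<notin> Some ` D"
  defines "B \<equiv> SUP r\<in>frontier D. cassinian_quotient x y r"
  shows "cassinian_cross_ratio (Some x) (Some y) p q \<le> 2 * B + B\<^sup>2"
proof -
  have le_B: "cassinian_quotient x y w \<le> B" if "w \<notin> D" for w
    unfolding B_def using cassinian_quotient_le_SUP_frontier[OF D(1) xy that] .
  obtain w where "w \<notin> D"
    using D(2) by blast
  then have "0 \<le> B"
    using le_B cassinian_quotient_nonneg[of x y w] by fastforce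
  then have le_bound: "c \<le> 2 * B + B\<^sup>2" if "c \<le> B" for c
    using that by (simp add: add_increasing2)
  show ?thesis
  proof (cases p)
    case None
    show ?thesis
    proof (cases q)
      case (Some q')
      then have "cassinian_cross_ratio (Some x) (Some y) p q = cassinian_quotient x y q'"
        using None by (simp add: cassinian_cross_ratio_def cassinian_quotient_def)
      then show ?thesis
        using le_B[of q'] pq(2) Some le_bound by auto
    qed (simp add: None cassinian_cross_ratio_def \<open>0 \<le> B\<close>)
  next
    case (Some p')
    have p': "cassinian_quotient x y p' \<le> B"
      using le_B pq(1) Some by blast
    show ?thesis
    proof (cases q)
      case None
      then show ?thesis
        using Some p' le_bound by (simp add: cassinian_cross_ratio_infinity)
    next
      case (Some q')
      have q': "cassinian_quotient x y q' \<le> B"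
        using le_B pq(2) Some by blast
      have "cassinian_quotient x y p' * cassinian_quotient x y q' \<le> B * B"
        using p' q' by (intro mult_mono) (simp_all add: cassinian_quotient_nonneg \<open>0 \<le> B\<close>)
      then show ?thesis
        using cassinian_cross_ratio_le[of x y p' q'] p' q' \<open>p = Some p'\<close> Some
        by (simp add: power2_eq_square)
    qed
  qed
qed

lemma sic_metric_le_of_dist_scaling:
  fixes D D' :: "(real ^ 'n) set"
  assumes D: "open D" "D \<noteq> UNIV" and D': "open D'" "D' \<noteq> UNIV"
    and f: "dist_scaling f" "bij f" "f ` Some ` D = Some ` D'"
    and xy: "x \<in> D" "y \<in> D" "f (Some x) = Some x'" "f (Some y) = Some y'"
  shows "sic_metric D' x' y' \<le> 2 * sic_metric D x y"
proof -
  define B where "B = (SUP p\<in>frontier D. cassinian_quotient x y p)"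
  define B' where "B' = (SUP p\<in>frontier D'. cassinian_quotient x' y' p)"
  have "Some x' \<in> Some ` D'" "Some y' \<in> Some ` D'"
    unfolding f(3)[symmetric] using xy by (metis image_eqI)+
  then have xy': "x' \<in> D'" "y' \<in> D'"
    by auto
  have "cassinian_quotient x' y' p' \<le> 2 * B + B\<^sup>2" if "p' \<in> frontier D'" for p'
  proof -
    define p q where "p = inv f (Some p')" and "q = inv f None"
    have p: "f p = Some p'" and q: "f q = None"
      using f(2) by (simp_all add: p_def q_def bij_is_surj surj_f_inv_f)
    have "p' \<notin> D'"
      using that D'(1) by (simp add: frontier_def interior_open)
    then have "f p \<notin> Some ` D'" "f q \<notin> Some ` D'"
      using p q by auto
    then have "p \<notin> Some ` D" "q \<notin> Some ` D"
      unfolding f(3)[symmetric] by blast+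
    moreover have "cassinian_quotient x' y' p' = cassinian_cross_ratio (Some x) (Some y) p q"
      using dist_scaling_cassinian_cross_ratio[OF f(1), of "Some x" "Some y" p q] xy p q
      by (simp add: cassinian_cross_ratio_infinity)
    ultimately show ?thesis
      unfolding B_def using cassinian_cross_ratio_le_SUP_frontier[OF D xy(1,2)] by simp
  qed
  moreover have "frontier D' \<noteq> {}"
    using D' xy' frontier_not_empty by blast
  ultimately have "B' \<le> 2 * B + B\<^sup>2"
    unfolding B'_def by (intro cSUP_least)
  moreover obtain w w' where "w \<notin> D" "w' \<notin> D'"
    using D(2) D'(2) by blast
  then have "0 \<le> B" "0 \<le> B'"
    using cassinian_quotient_le_SUP_frontier[OF D(1) xy(1,2), of w]
      cassinian_quotient_le_SUP_frontier[OF D'(1) xy', of w']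
      cassinian_quotient_nonneg[of x y w] cassinian_quotient_nonneg[of x' y' w']
    unfolding B_def B'_def by linarith+
  ultimately have "1 + B' \<le> (1 + B)\<^sup>2"
    by (simp add: power2_eq_square algebra_simps)
  then have "ln (1 + B') \<le> ln ((1 + B)\<^sup>2)"
    using \<open>0 \<le> B'\<close> by (subst ln_le_cancel_iff) auto
  also have "\<dots> = 2 * ln (1 + B)"
    using \<open>0 \<le> B\<close> by (simp add: ln_realpow)
  finally show ?thesis
    unfolding sic_metric_def B_def B'_def cassinian_quotient_def .
qed

theorem theorem5p2:
  fixes D D' :: "(real ^ 'n) set" and f :: "'n ext \<Rightarrow> 'n ext"
  assumes "CARD('n) \<ge> 2"
    and "proper_domain D" and "proper_domain D'"
    and "mobius f"
    and "f ` (Some ` D) = Some ` D'"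
    and "x \<in> D" and "y \<in> D"
  shows "sic_metric D x y / 2 \<le> sic_metric D' (the (f (Some x))) (the (f (Some y)))
       \<and> sic_metric D' (the (f (Some x))) (the (f (Some y))) \<le> 2 * sic_metric D x y"
proof -
  have D: "open D" "D \<noteq> UNIV" and D': "open D'" "D' \<noteq> UNIV"
    using assms(2,3) by (simp_all add: proper_domain_def)
  obtain f_scal: "dist_scaling f" and f_bij: "bij f"
    using mobius_dist_scaling_bij[OF assms(4)] by blast
  have "f (Some x) \<in> Some ` D'" "f (Some y) \<in> Some ` D'"
    using assms(5-7) by blast+
  then have f_xy: "f (Some x) = Some (the (f (Some x)))" "f (Some y) = Some (the (f (Some y)))"
    and xy': "the (f (Some x)) \<in> D'" "the (f (Some y)) \<in> D'"
    by auto
  have inv_image: "inv f ` Some ` D' = Some ` D"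
    using assms(5) f_bij by (metis bij_is_inj image_inv_f_f)
  have inv_xy: "inv f (Some (the (f (Some x)))) = Some x" "inv f (Some (the (f (Some y)))) = Some y"
    using f_xy f_bij by (metis bij_is_inj inv_f_f)+
  show ?thesis
    using sic_metric_le_of_dist_scaling[OF D D' f_scal f_bij assms(5-7) f_xy]
      sic_metric_le_of_dist_scaling[OF D' D dist_scaling_inv[OF f_scal f_bij]
        bij_imp_bij_inv[OF f_bij] inv_image xy' inv_xy]
    by simp
qed

end
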